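(* Let $d \geq 2$ and let $\varGamma$ be a lattice in $\mathbb{R}^d$. Let $R \in \operatorname{SOS}(\varGamma)$. Then: (1) $b\cdot \operatorname{scal}_\varGamma(R) \subset \operatorname{scal}_\varGamma(R)$ for all $b \in \mathbb{Q}\setminus\{0\}$; (2) if $r \in \mathbb{R}$ satisfies $r\varGamma \sim \varGamma$, then $r \in \mathbb{Q}$; (3) $\alpha\beta^{-1} \in \mathbb{Q}$ for all $\alpha, \beta \in \operatorname{scal}_\varGamma(R)$.
   Context: A lattice in $\mathbb{R}^d$ is a subgroup of the form $\mathbb{Z}b_1\oplus\cdots\oplus\mathbb{Z}b_d$ where $\{b_1,\dots,b_d\}$ is a basis of $\mathbb{R}^d$. Two lattices (more generally, subgroups) $\varGamma,\varGamma'$ of $\mathbb{R}^d$ are commensurate, written $\varGamma\sim\varGamma'$, if $\varGamma\cap\varGamma'$ has finite index both in $\varGamma$ and in $\varGamma'$. For $R\in\operatorname{SO}(d)$, $\operatorname{scal}_\varGamma(R)=\{\alpha\in\mathbb{R} : \varGamma\sim\alpha R\varGamma\}$. The group of similarity rotations is $\operatorname{SOS}(\varGamma)=\{R\in\operatorname{SO}(d) : \varGamma\sim\alpha R\varGamma \text{ for some } \alpha>0\}$, equivalently the set of $R\in\operatorname{SO}(d)$ with $\operatorname{scal}_\varGamma(R)\neq\varnothing$. *)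

theory Defs
  imports "HOL-Analysis.Analysis"
begin

text \<open>A lattice in R^d: the integer span of a basis b_1,...,b_d of R^d
  (basis indexed by the finite index type 'n, d = CARD('n)).\<close>
definition is_lattice :: "(real^'n) set \<Rightarrow> bool" where
  "is_lattice \<Gamma> \<longleftrightarrow> (\<exists>b :: 'n \<Rightarrow> real^'n.
      inj b \<and> independent (range b) \<and> span (range b) = UNIV \<and>
      \<Gamma> = {(\<Sum>i\<in>UNIV. of_int (k i) *\<^sub>R b i) | k :: 'n \<Rightarrow> int. True})"

definition cosets_in :: "('a::ab_group_add) set \<Rightarrow> 'a set \<Rightarrow> 'a set set" where
  "cosets_in H G = {(\<lambda>x. g + x) ` H | g. g \<in> G}"

definition commensurate :: "('a::ab_group_add) set \<Rightarrow> 'a set \<Rightarrow> bool" where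
  "commensurate G G' \<longleftrightarrow>
     finite (cosets_in (G \<inter> G') G) \<and> finite (cosets_in (G \<inter> G') G')"

definition SO :: "(real^'n^'n) set" where
  "SO = {R. orthogonal_matrix R \<and> det R = 1}"

definition scal :: "(real^'n) set \<Rightarrow> real^'n^'n \<Rightarrow> real set" where
  "scal \<Gamma> R = {\<alpha>. commensurate \<Gamma> ((\<lambda>x. \<alpha> *\<^sub>R (R *v x)) ` \<Gamma>)}"

definition SOS :: "(real^'n) set \<Rightarrow> (real^'n^'n) set" where
  "SOS \<Gamma> = {R \<in> SO. \<exists>\<alpha>>0. commensurate \<Gamma> ((\<lambda>x. \<alpha> *\<^sub>R (R *v x)) ` \<Gamma>)}"

end

theory Submission
  imports Defs
begin

text \<open>For groups spanned over \<open>\<int>\<close> by finitely many vectors, commensurability means that every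
  generator of each group has a positive integer multiple in the other: pigeonhole on the cosets
  gives one direction, reducing coefficients modulo these multiples the other. Hence
  commensurability of such spans is transitive, survives linear maps, and relates a span to its
  rescaling by a nonzero rational; this gives (1). For (2), if \<open>m b\<^sub>j = r \<gamma>\<close> with \<open>\<gamma> \<in> \<Gamma>\<close>
  and \<open>b\<close> a basis of \<open>\<Gamma>\<close>, the coordinates of \<open>\<gamma>\<close> force \<open>m/r \<in> \<int>\<close>. For (3), \<open>\<alpha>R\<Gamma>\<close> and
  \<open>\<beta>R\<Gamma>\<close> are commensurate through \<open>\<Gamma>\<close>, and applying \<open>\<beta>\<inverse>R\<inverse>\<close> yields \<open>(\<alpha>/\<beta>)\<Gamma> \<sim> \<Gamma>\<close>.\<close>

definition additive_subgroup :: "'a::real_vector set \<Rightarrow> bool" where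
  "additive_subgroup H \<longleftrightarrow> 0 \<in> H \<and> (\<forall>x\<in>H. \<forall>y\<in>H. x + y \<in> H) \<and> (\<forall>x\<in>H. - x \<in> H)"

definition int_span :: "('i::finite \<Rightarrow> 'a::real_vector) \<Rightarrow> 'a set" where
  "int_span v = {(\<Sum>i\<in>UNIV. of_int (k i) *\<^sub>R v i) | k :: 'i \<Rightarrow> int. True}"

definition multiple_in :: "'a::real_vector set \<Rightarrow> 'a \<Rightarrow> bool" where
  "multiple_in H x \<longleftrightarrow> (\<exists>m::nat. m > 0 \<and> of_nat m *\<^sub>R x \<in> H)"

lemma additive_subgroup_scaleR_of_nat:
  "additive_subgroup H \<Longrightarrow> x \<in> H \<Longrightarrow> of_nat n *\<^sub>R x \<in> H"
  by (induction n) (auto simp: additive_subgroup_def algebra_simps)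

lemma additive_subgroup_scaleR_of_int:
  assumes "additive_subgroup H" "x \<in> H"
  shows "of_int k *\<^sub>R x \<in> H"
proof (cases "k \<ge> 0")
  case True
  then show ?thesis
    using additive_subgroup_scaleR_of_nat[OF assms, of "nat k"] by simp
next
  case False
  have "- (of_nat (nat (- k)) *\<^sub>R x) \<in> H"
    using assms additive_subgroup_scaleR_of_nat[OF assms] unfolding additive_subgroup_def by blast
  moreover have "of_int k = - real (nat (- k))" using False by simp
  ultimately show ?thesis by (simp only: scaleR_minus_left)
qed

lemma additive_subgroup_sum:
  "additive_subgroup H \<Longrightarrow> (\<And>i. i \<in> I \<Longrightarrow> f i \<in> H) \<Longrightarrow> sum f I \<in> H"
  by (induction I rule: infinite_finite_induct) (auto simp: additive_subgroup_def)

lemma additive_subgroup_Int: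
  "additive_subgroup H \<Longrightarrow> additive_subgroup K \<Longrightarrow> additive_subgroup (H \<inter> K)"
  by (auto simp: additive_subgroup_def)

lemma additive_subgroup_multiple_in:
  assumes "additive_subgroup H"
  shows "additive_subgroup {x. multiple_in H x}"
  unfolding additive_subgroup_def Ball_def mem_Collect_eq
proof (intro conjI allI impI)
  show "multiple_in H 0"
    using assms unfolding multiple_in_def additive_subgroup_def by (auto intro: exI[of _ 1])
next
  fix x y assume "multiple_in H x" "multiple_in H y"
  then obtain m n :: nat where mn: "m > 0" "of_nat m *\<^sub>R x \<in> H" "n > 0" "of_nat n *\<^sub>R y \<in> H"
    unfolding multiple_in_def by blast
  have "of_nat (m * n) *\<^sub>R (x + y) = of_nat n *\<^sub>R (of_nat m *\<^sub>R x) + of_nat m *\<^sub>R (of_nat n *\<^sub>R y)"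
    by (simp add: algebra_simps)
  also have "\<dots> \<in> H"
    using assms mn(2,4) additive_subgroup_scaleR_of_nat[OF assms] unfolding additive_subgroup_def
    by blast
  finally show "multiple_in H (x + y)"
    unfolding multiple_in_def using mn by (intro exI[of _ "m * n"]) simp
next
  fix x assume "multiple_in H x"
  then show "multiple_in H (- x)"
    using assms unfolding multiple_in_def additive_subgroup_def by auto
qed

lemma additive_subgroup_int_span: "additive_subgroup (int_span v)"
  unfolding additive_subgroup_def int_span_def
proof (intro conjI ballI)
  show "0 \<in> {\<Sum>i\<in>UNIV. of_int (k i) *\<^sub>R v i |k. True}"
    by (intro CollectI exI[of _ "\<lambda>i. 0"]) simp
next
  fix x y assume "x \<in> {\<Sum>i\<in>UNIV. of_int (k i) *\<^sub>R v i |k. True}"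
    "y \<in> {\<Sum>i\<in>UNIV. of_int (k i) *\<^sub>R v i |k. True}"
  then obtain k k' where "x = (\<Sum>i\<in>UNIV. of_int (k i) *\<^sub>R v i)" "y = (\<Sum>i\<in>UNIV. of_int (k' i) *\<^sub>R v i)"
    by auto
  then show "x + y \<in> {\<Sum>i\<in>UNIV. of_int (k i) *\<^sub>R v i |k. True}"
    by (intro CollectI exI[of _ "\<lambda>i. k i + k' i"]) (simp add: sum.distrib scaleR_add_left)
next
  fix x assume "x \<in> {\<Sum>i\<in>UNIV. of_int (k i) *\<^sub>R v i |k. True}"
  then obtain k where "x = (\<Sum>i\<in>UNIV. of_int (k i) *\<^sub>R v i)" by auto
  then show "- x \<in> {\<Sum>i\<in>UNIV. of_int (k i) *\<^sub>R v i |k. True}"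
    by (intro CollectI exI[of _ "\<lambda>i. - k i"]) (simp add: sum_negf)
qed

lemma int_span_subset:
  assumes "additive_subgroup H" "\<And>i. v i \<in> H"
  shows "int_span v \<subseteq> H"
  unfolding int_span_def
  using assms by (auto intro!: additive_subgroup_sum additive_subgroup_scaleR_of_int)

lemma sum_scaleR_delta:
  fixes v :: "'i::finite \<Rightarrow> 'a::real_vector"
  shows "(\<Sum>i\<in>UNIV. (if i = j then x else 0) *\<^sub>R v i) = x *\<^sub>R v j"
proof -
  have "(\<Sum>i\<in>UNIV. (if i = j then x else 0) *\<^sub>R v i) = (\<Sum>i\<in>UNIV. if i = j then x *\<^sub>R v i else 0)"
    by (rule sum.cong) auto
  then show ?thesis by simp
qed

lemma generator_in_int_span: "v j \<in> int_span v"
proof -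
  have "v j = (\<Sum>i\<in>UNIV. of_int (if i = j then 1 else 0) *\<^sub>R v i)"
    using sum_scaleR_delta[of j 1 v] by (simp add: if_distrib[of real_of_int] cong: if_cong)
  then show ?thesis
    unfolding int_span_def by (intro CollectI exI[of _ "\<lambda>i. if i = j then 1 else 0"]) simp
qed

lemma int_span_linear_image:
  assumes "linear f"
  shows "f ` int_span v = int_span (\<lambda>i. f (v i))"
proof -
  have image_sum: "f (\<Sum>i\<in>UNIV. of_int (k i) *\<^sub>R v i) = (\<Sum>i\<in>UNIV. of_int (k i) *\<^sub>R f (v i))"
    for k using assms by (simp add: linear_sum linear_scale)
  show ?thesis
    unfolding int_span_def
  proof (intro set_eqI iffI)
    fix y assume "y \<in> f ` {\<Sum>i\<in>UNIV. of_int (k i) *\<^sub>R v i |k. True}"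
    then show "y \<in> {\<Sum>i\<in>UNIV. of_int (k i) *\<^sub>R f (v i) |k. True}"
      using image_sum by auto
  next
    fix y assume "y \<in> {\<Sum>i\<in>UNIV. of_int (k i) *\<^sub>R f (v i) |k. True}"
    then obtain k where "y = f (\<Sum>i\<in>UNIV. of_int (k i) *\<^sub>R v i)"
      using image_sum by auto
    then show "y \<in> f ` {\<Sum>i\<in>UNIV. of_int (k i) *\<^sub>R v i |k. True}" by auto
  qed
qed

lemma translate_eq_if_diff_mem:
  assumes "additive_subgroup H" "a - c \<in> H"
  shows "(\<lambda>x. a + x) ` H = (\<lambda>x. c + x) ` H"
proof -
  have subset: "(\<lambda>x. a + x) ` H \<subseteq> (\<lambda>x. c + x) ` H" if "a - c \<in> H" for a c
  proof
    fix y assume "y \<in> (\<lambda>x. a + x) ` H"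
    then obtain x where "x \<in> H" "y = a + x" by auto
    moreover have "(a - c) + x \<in> H" using assms(1) that \<open>x \<in> H\<close> by (auto simp: additive_subgroup_def)
    ultimately show "y \<in> (\<lambda>x. c + x) ` H" by (auto intro: image_eqI[of _ _ "(a - c) + x"])
  qed
  have "c - a \<in> H" using assms unfolding additive_subgroup_def by (metis minus_diff_eq)
  then show ?thesis using subset assms(2) by blast
qed

lemma multiple_in_if_finite_cosets:
  assumes fin: "finite (cosets_in H G)" and "0 \<in> H" and multiples: "\<And>n::nat. of_nat n *\<^sub>R g \<in> G"
  shows "multiple_in H g"
proof -
  define coset where "coset n = (\<lambda>x. of_nat n *\<^sub>R g + x) ` H" for n :: nat
  have "range coset \<subseteq> cosets_in H G" unfolding coset_def cosets_in_def using multiples by blast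
  then have "\<not> inj coset"
    using fin finite_subset finite_imageD infinite_UNIV_nat by blast
  then obtain i j where "i < j" "coset i = coset j"
    unfolding inj_def by (metis linorder_neq_iff)
  moreover have "of_nat j *\<^sub>R g \<in> coset j" unfolding coset_def using \<open>0 \<in> H\<close> by force
  ultimately obtain h where "h \<in> H" "of_nat j *\<^sub>R g = of_nat i *\<^sub>R g + h"
    unfolding coset_def by auto
  then have "of_nat (j - i) *\<^sub>R g \<in> H"
    using \<open>i < j\<close> by (simp add: of_nat_diff scaleR_diff_left algebra_simps)
  then show ?thesis unfolding multiple_in_def using \<open>i < j\<close> by (intro exI[of _ "j - i"]) simp
qed

text \<open>Every coset of \<open>H\<close> contains a representative \<open>\<Sum>i. r\<^sub>i v\<^sub>i\<close> with \<open>0 \<le> r\<^sub>i < m\<^sub>i\<close>,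
  where \<open>m\<^sub>i v\<^sub>i \<in> H\<close>.\<close>
lemma finite_cosets_int_span:
  fixes v :: "'i::finite \<Rightarrow> 'a::real_vector"
  assumes H: "additive_subgroup H" and multiples: "\<And>i. multiple_in H (v i)"
  shows "finite (cosets_in H (int_span v))"
proof -
  obtain m :: "'i \<Rightarrow> nat" where m: "\<And>i. m i > 0" "\<And>i. of_nat (m i) *\<^sub>R v i \<in> H"
    using multiples unfolding multiple_in_def by metis
  define rep where "rep k = (\<Sum>i\<in>UNIV. of_int (k i mod int (m i)) *\<^sub>R v i)" for k :: "'i \<Rightarrow> int"
  define K where "K = Pi UNIV (\<lambda>i. {0..<int (m i)})"
  have "finite K" unfolding K_def
    using finite_PiE[of UNIV "\<lambda>i. {0..<int (m i)}"] by (simp add: PiE_UNIV_domain)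
  moreover have "cosets_in H (int_span v) \<subseteq> (\<lambda>k. (\<lambda>x. rep k + x) ` H) ` K"
  proof
    fix C assume "C \<in> cosets_in H (int_span v)"
    then obtain k where C: "C = (\<lambda>x. (\<Sum>i\<in>UNIV. of_int (k i) *\<^sub>R v i) + x) ` H"
      unfolding cosets_in_def int_span_def by auto
    have "of_int (k i) *\<^sub>R v i - of_int (k i mod int (m i)) *\<^sub>R v i
        = of_int (k i div int (m i)) *\<^sub>R (of_nat (m i) *\<^sub>R v i)" for i
    proof -
      have "real_of_int (k i) = real_of_int (k i div int (m i)) * real (m i) + real_of_int (k i mod int (m i))"
        by (metis of_int_add of_int_mult of_int_of_nat_eq div_mult_mod_eq)
      then show ?thesis by (simp add: scaleR_diff_left[symmetric])
    qed
    then have "(\<Sum>i\<in>UNIV. of_int (k i) *\<^sub>R v i) - rep k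
        = (\<Sum>i\<in>UNIV. of_int (k i div int (m i)) *\<^sub>R (of_nat (m i) *\<^sub>R v i))"
      unfolding rep_def sum_subtractf[symmetric] by simp
    also have "\<dots> \<in> H"
      using H m by (intro additive_subgroup_sum additive_subgroup_scaleR_of_int)
    finally have "C = (\<lambda>x. rep k + x) ` H" unfolding C by (rule translate_eq_if_diff_mem[OF H])
    moreover have "rep k = rep (\<lambda>i. k i mod int (m i))" unfolding rep_def by simp
    moreover have "(\<lambda>i. k i mod int (m i)) \<in> K" unfolding K_def using m by auto
    ultimately show "C \<in> (\<lambda>k. (\<lambda>x. rep k + x) ` H) ` K" by auto
  qed
  ultimately show ?thesis by (rule finite_surj)
qed

lemma finite_cosets_int_span_iff:
  assumes "additive_subgroup H"
  shows "finite (cosets_in H (int_span v)) \<longleftrightarrow> (\<forall>i. multiple_in H (v i))"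
proof
  assume "finite (cosets_in H (int_span v))"
  moreover have "0 \<in> H" using assms unfolding additive_subgroup_def by blast
  moreover have "of_nat n *\<^sub>R v i \<in> int_span v" for n i
    by (rule additive_subgroup_scaleR_of_nat[OF additive_subgroup_int_span generator_in_int_span])
  ultimately show "\<forall>i. multiple_in H (v i)" by (blast intro: multiple_in_if_finite_cosets)
qed (use assms finite_cosets_int_span in blast)

lemma multiple_in_Int_iff:
  assumes "\<And>n::nat. of_nat n *\<^sub>R x \<in> A"
  shows "multiple_in (A \<inter> B) x \<longleftrightarrow> multiple_in B x"
  using assms unfolding multiple_in_def by blast

lemma commensurate_int_span_iff:
  "commensurate (int_span v) (int_span w) \<longleftrightarrow>
     (\<forall>i. multiple_in (int_span w) (v i)) \<and> (\<forall>j. multiple_in (int_span v) (w j))"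
proof -
  have multiples: "of_nat n *\<^sub>R v i \<in> int_span v" "of_nat n *\<^sub>R w j \<in> int_span w" for n i j
    by (rule additive_subgroup_scaleR_of_nat[OF additive_subgroup_int_span generator_in_int_span])+
  have "additive_subgroup (int_span v \<inter> int_span w)"
    by (intro additive_subgroup_Int additive_subgroup_int_span)
  moreover have "multiple_in (int_span v \<inter> int_span w) (v i) \<longleftrightarrow> multiple_in (int_span w) (v i)" for i
    by (rule multiple_in_Int_iff[OF multiples(1)])
  moreover have "multiple_in (int_span v \<inter> int_span w) (w j) \<longleftrightarrow> multiple_in (int_span v) (w j)" for j
    using multiple_in_Int_iff[OF multiples(2), of "int_span v"] by (simp add: Int_commute)
  ultimately show ?thesis
    unfolding commensurate_def by (simp add: finite_cosets_int_span_iff)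
qed

lemma multiple_in_trans:
  assumes "multiple_in A x" "A \<subseteq> {y. multiple_in B y}"
  shows "multiple_in B x"
proof -
  obtain m n :: nat where "m > 0" "n > 0" "of_nat n *\<^sub>R (of_nat m *\<^sub>R x) \<in> B"
    using assms unfolding multiple_in_def by blast
  then show ?thesis unfolding multiple_in_def by (intro exI[of _ "n * m"]) simp
qed

lemma multiple_in_linear_image:
  assumes "linear f" "multiple_in B x"
  shows "multiple_in (f ` B) (f x)"
  using assms unfolding multiple_in_def by (metis image_eqI linear_scale)

lemma commensurate_commute: "commensurate A B \<longleftrightarrow> commensurate B A"
  unfolding commensurate_def by (auto simp: Int_commute)

lemma commensurate_int_span_trans:
  assumes "commensurate (int_span u) (int_span v)" "commensurate (int_span v) (int_span w)"
  shows "commensurate (int_span u) (int_span w)"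
proof -
  have "int_span v \<subseteq> {y. multiple_in (int_span w) y}" "int_span v \<subseteq> {y. multiple_in (int_span u) y}"
    using assms by (intro int_span_subset additive_subgroup_multiple_in additive_subgroup_int_span;
        simp add: commensurate_int_span_iff)+
  then show ?thesis
    using assms by (auto simp: commensurate_int_span_iff intro: multiple_in_trans)
qed

lemma commensurate_int_span_linear_image:
  assumes "linear f" "commensurate (int_span v) (int_span w)"
  shows "commensurate (f ` int_span v) (f ` int_span w)"
proof -
  have images: "f ` int_span v = int_span (\<lambda>i. f (v i))" "f ` int_span w = int_span (\<lambda>i. f (w i))"
    using assms(1) by (simp_all add: int_span_linear_image)
  from assms(2) have "\<forall>i. multiple_in (f ` int_span w) (f (v i))" "\<forall>j. multiple_in (f ` int_span v) (f (w j))"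
    by (auto simp: commensurate_int_span_iff intro: multiple_in_linear_image[OF assms(1)])
  then show ?thesis unfolding images commensurate_int_span_iff by (simp add: images)
qed

lemma commensurate_int_span_scaleR_Rats:
  assumes "b \<in> \<rat>" "b \<noteq> 0"
  shows "commensurate (int_span v) (int_span (\<lambda>i. b *\<^sub>R v i))"
proof -
  obtain p q where pq: "q > 0" "b = of_int p / of_int q"
    using Rats_cases'[OF assms(1)] by metis
  with assms(2) have "p \<noteq> 0" by auto
  have bq: "b * of_int q = of_int p" using pq by simp
  have "real (nat \<bar>p\<bar>) = of_int \<bar>p\<bar>" by simp
  also have "\<dots> = of_int p * of_int (sgn p)" by (simp only: abs_sgn of_int_mult)
  also have "\<dots> = of_int (q * sgn p) * b" by (simp add: bq[symmetric])
  finally have abs_p: "real (nat \<bar>p\<bar>) = of_int (q * sgn p) * b" .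
  have "multiple_in (int_span (\<lambda>i. b *\<^sub>R v i)) (v i)" for i
  proof -
    have "of_nat (nat \<bar>p\<bar>) *\<^sub>R v i = of_int (q * sgn p) *\<^sub>R (b *\<^sub>R v i)"
      by (simp only: abs_p scaleR_scaleR)
    also have "\<dots> \<in> int_span (\<lambda>i. b *\<^sub>R v i)"
      by (intro additive_subgroup_scaleR_of_int additive_subgroup_int_span generator_in_int_span)
    finally show ?thesis unfolding multiple_in_def using \<open>p \<noteq> 0\<close> by (intro exI[of _ "nat \<bar>p\<bar>"]) simp
  qed
  moreover have "multiple_in (int_span v) (b *\<^sub>R v i)" for i
  proof -
    have "of_nat (nat q) *\<^sub>R (b *\<^sub>R v i) = of_int p *\<^sub>R v i"
      using pq by simp
    also have "\<dots> \<in> int_span v"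
      by (intro additive_subgroup_scaleR_of_int additive_subgroup_int_span generator_in_int_span)
    finally show ?thesis unfolding multiple_in_def using pq by (intro exI[of _ "nat q"]) simp
  qed
  ultimately show ?thesis unfolding commensurate_int_span_iff by blast
qed

lemma lattice_basis:
  fixes \<Gamma> :: "(real^'n) set"
  assumes "is_lattice \<Gamma>"
  obtains b :: "'n \<Rightarrow> real^'n" where "inj b" "independent (range b)" "\<Gamma> = int_span b"
proof -
  from assms obtain b :: "'n \<Rightarrow> real^'n" where "inj b" "independent (range b)"
    "\<Gamma> = {(\<Sum>i\<in>UNIV. of_int (k i) *\<^sub>R b i) | k. True}"
    unfolding is_lattice_def by blast
  then show thesis using that unfolding int_span_def by blast
qed

lemma scaleR_basis_in_int_span_imp_Ints:
  fixes b :: "'i::finite \<Rightarrow> 'a::real_vector"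
  assumes "inj b" "independent (range b)" "x *\<^sub>R b j \<in> int_span b"
  shows "x \<in> \<int>"
proof -
  obtain k where k: "(\<Sum>i\<in>UNIV. of_int (k i) *\<^sub>R b i) = x *\<^sub>R b j"
    using assms(3) unfolding int_span_def by auto
  define c where "c i = of_int (k i) - (if i = j then x else 0)" for i
  have "(\<Sum>i\<in>UNIV. c i *\<^sub>R b i) = (\<Sum>i\<in>UNIV. of_int (k i) *\<^sub>R b i) - (\<Sum>i\<in>UNIV. (if i = j then x else 0) *\<^sub>R b i)"
    unfolding c_def by (simp add: scaleR_diff_left sum_subtractf)
  also have "\<dots> = 0" by (simp add: k sum_scaleR_delta)
  finally have "(\<Sum>y\<in>range b. c (inv b y) *\<^sub>R y) = 0"
    using assms(1) by (simp add: sum.reindex)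
  then have "c (inv b (b j)) = 0"
    using independentD[OF assms(2), of "range b" "\<lambda>y. c (inv b y)" "b j"] by simp
  then have "x = of_int (k j)" using assms(1) by (simp add: c_def)
  then show ?thesis by simp
qed

lemma linear_scaleR_matrix_vector_mult:
  fixes A :: "real^'n^'m"
  shows "linear (\<lambda>x. c *\<^sub>R (A *v x))"
  using linear_compose[OF matrix_vector_mul_linear[of A] linear_scale_self[of c]] by (simp add: o_def)

lemma scaleR_matrix_image_int_span:
  fixes A :: "real^'n^'m"
  shows "(\<lambda>x. c *\<^sub>R (A *v x)) ` int_span b = int_span (\<lambda>i. c *\<^sub>R (A *v b i))"
  by (rule int_span_linear_image[OF linear_scaleR_matrix_vector_mult])

lemma scal_int_span_iff:
  "c \<in> scal (int_span b) A \<longleftrightarrow> commensurate (int_span b) (int_span (\<lambda>i. c *\<^sub>R (A *v b i)))"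
  by (simp add: scal_def scaleR_matrix_image_int_span)

lemma commensurate_scaleR_lattice_imp_Rats:
  fixes \<Gamma> :: "(real^'n) set"
  assumes "is_lattice \<Gamma>" "commensurate ((\<lambda>x. r *\<^sub>R x) ` \<Gamma>) \<Gamma>"
  shows "r \<in> \<rat>"
proof -
  obtain b :: "'n \<Rightarrow> real^'n" where b: "inj b" "independent (range b)" "\<Gamma> = int_span b"
    using assms(1) by (rule lattice_basis)
  fix j
  have scaled_image: "(\<lambda>x. r *\<^sub>R x) ` int_span b = int_span (\<lambda>i. r *\<^sub>R b i)"
    using int_span_linear_image[of "\<lambda>x. r *\<^sub>R x" b] linear_scale_self by blast
  from assms(2) have "commensurate (int_span (\<lambda>i. r *\<^sub>R b i)) (int_span b)"
    unfolding b(3) scaled_image .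
  then have "multiple_in (int_span (\<lambda>i. r *\<^sub>R b i)) (b j)"
    unfolding commensurate_int_span_iff by blast
  then obtain m :: nat where "m > 0" "of_nat m *\<^sub>R b j \<in> (\<lambda>x. r *\<^sub>R x) ` \<Gamma>"
    unfolding multiple_in_def b(3) scaled_image by blast
  then obtain \<gamma> where "\<gamma> \<in> \<Gamma>" and m_b: "of_nat m *\<^sub>R b j = r *\<^sub>R \<gamma>" by auto
  have "b j \<noteq> 0" by (metis b(2) dependent_zero rangeI)
  with m_b \<open>m > 0\<close> have "r \<noteq> 0" by auto
  then have "\<gamma> = inverse r *\<^sub>R (r *\<^sub>R \<gamma>)" by simp
  also have "\<dots> = (of_nat m / r) *\<^sub>R b j" by (simp add: m_b[symmetric] divide_inverse_commute)
  finally have "\<gamma> = (of_nat m / r) *\<^sub>R b j" .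
  with \<open>\<gamma> \<in> \<Gamma>\<close> have "of_nat m / r \<in> \<int>"
    using scaleR_basis_in_int_span_imp_Ints[OF b(1,2)] b(3) by simp
  then have "of_nat m / (of_nat m / r) \<in> \<rat>"
    using Rats_divide[OF Rats_of_nat] Ints_subset_Rats by blast
  moreover have "of_nat m / (of_nat m / r) = r" using \<open>m > 0\<close> by simp
  ultimately show ?thesis by simp
qed

lemma scal_lattice_mult_Rats:
  fixes \<Gamma> :: "(real^'n) set"
  assumes "is_lattice \<Gamma>" "\<alpha> \<in> scal \<Gamma> A" "q \<in> \<rat>" "q \<noteq> 0"
  shows "q * \<alpha> \<in> scal \<Gamma> A"
proof -
  obtain b :: "'n \<Rightarrow> real^'n" where "\<Gamma> = int_span b"
    using assms(1) by (rule lattice_basis)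
  moreover from this have "commensurate (int_span b) (int_span (\<lambda>i. \<alpha> *\<^sub>R (A *v b i)))"
    using assms(2) by (simp add: scal_int_span_iff)
  moreover have "commensurate (int_span (\<lambda>i. \<alpha> *\<^sub>R (A *v b i))) (int_span (\<lambda>i. q *\<^sub>R \<alpha> *\<^sub>R (A *v b i)))"
    by (rule commensurate_int_span_scaleR_Rats[OF assms(3,4)])
  ultimately show ?thesis
    by (simp add: scal_int_span_iff commensurate_int_span_trans[of b])
qed

lemma scal_lattice_ratio_Rats:
  fixes \<Gamma> :: "(real^'n) set"
  assumes "is_lattice \<Gamma>" "invertible A" "\<alpha> \<in> scal \<Gamma> A" "\<beta> \<in> scal \<Gamma> A"
  shows "\<alpha> * inverse \<beta> \<in> \<rat>"
proof (cases "\<beta> = 0")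
  case False
  obtain b :: "'n \<Rightarrow> real^'n" where b: "\<Gamma> = int_span b"
    using assms(1) by (rule lattice_basis)
  obtain B where B: "B ** A = mat 1"
    using assms(2) invertible_left_inverse by blast
  define f where "f x = inverse \<beta> *\<^sub>R (B *v x)" for x
  have f_image: "f ` int_span (\<lambda>i. c *\<^sub>R (A *v b i)) = (\<lambda>x. (c * inverse \<beta>) *\<^sub>R x) ` \<Gamma>" for c
    unfolding b scaleR_matrix_image_int_span[symmetric] image_image f_def
    by (simp add: matrix_vector_mult_scaleR matrix_vector_mul_assoc B mult.commute)
  have "commensurate (int_span (\<lambda>i. \<alpha> *\<^sub>R (A *v b i))) (int_span b)"
    using assms(3) by (simp add: b scal_int_span_iff commensurate_commute)
  moreover have "commensurate (int_span b) (int_span (\<lambda>i. \<beta> *\<^sub>R (A *v b i)))"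
    using assms(4) by (simp add: b scal_int_span_iff)
  ultimately have "commensurate (int_span (\<lambda>i. \<alpha> *\<^sub>R (A *v b i))) (int_span (\<lambda>i. \<beta> *\<^sub>R (A *v b i)))"
    by (rule commensurate_int_span_trans)
  then have "commensurate (f ` int_span (\<lambda>i. \<alpha> *\<^sub>R (A *v b i))) (f ` int_span (\<lambda>i. \<beta> *\<^sub>R (A *v b i)))"
    unfolding f_def by (rule commensurate_int_span_linear_image[OF linear_scaleR_matrix_vector_mult])
  then have "commensurate ((\<lambda>x. (\<alpha> * inverse \<beta>) *\<^sub>R x) ` \<Gamma>) \<Gamma>"
    using False by (simp add: f_image)
  then show ?thesis by (rule commensurate_scaleR_lattice_imp_Rats[OF assms(1)])
qed simp

theorem mainTheorem1:
  fixes \<Gamma> :: "(real^'n) set" and R :: "real^'n^'n"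
  assumes "CARD('n) \<ge> 2"
    and "is_lattice \<Gamma>"
    and "R \<in> SOS \<Gamma>"
  shows "(\<forall>b\<in>\<rat> - {0}. (\<lambda>a. b * a) ` scal \<Gamma> R \<subseteq> scal \<Gamma> R)
    \<and> (\<forall>r::real. commensurate ((\<lambda>x. r *\<^sub>R x) ` \<Gamma>) \<Gamma> \<longrightarrow> r \<in> \<rat>)
    \<and> (\<forall>\<alpha>\<in>scal \<Gamma> R. \<forall>\<beta>\<in>scal \<Gamma> R. \<alpha> * inverse \<beta> \<in> \<rat>)"
proof -
  have "orthogonal_matrix R" using assms(3) by (simp add: SOS_def SO_def)
  then have "invertible R" by (auto simp: invertible_left_inverse orthogonal_matrix)
  then show ?thesis
    using scal_lattice_mult_Rats[OF assms(2)] commensurate_scaleR_lattice_imp_Rats[OF assms(2)]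
      scal_lattice_ratio_Rats[OF assms(2)] by blast
qed

end
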